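(* For all $a,b\in[0,j_{3/2,1}]$, $$|b\sin a-a\sin b|\ge|a-b|\sqrt{(a\cos a-\sin a)(b\cos b-\sin b)},$$ where $j_{3/2,1}=4.4934\ldots$ is the first positive root of $\sin x=x\cos x$. *)

theory Defs
  imports "HOL-Analysis.Analysis"
begin

definition j32 :: real where
  "j32 = Inf {x::real. 0 < x \<and> sin x = x * cos x}"

end

theory Submission
  imports Defs
begin

text \<open>Write \<open>h x = sin x - x cos x\<close>, which is positive on \<open>]0, j32[\<close>.
Since \<open>(sin x / x)' = - h x / x\<^sup>2\<close>, for \<open>a \<le> b\<close> the difference \<open>b sin a - a sin b\<close> is \<open>a b\<close>
times the integral of \<open>g x = h x / x\<^sup>2\<close> over \<open>[a, b]\<close>. The function \<open>g\<close> is log-concave: this amounts to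
\<open>2 h(x)\<^sup>2 \<le> x\<^sup>2 (x\<^sup>2 - sin\<^sup>2 x)\<close>, which after doubling the angle follows from a chain of
elementary inequalities, each one integrated from the next. Finally, a log-concave \<open>g\<close> lies above
the exponential through its endpoint values, hence above the tangent of that exponential at the midpoint,
and integrating the tangent gives \<open>(b - a) sqrt (g a g b)\<close>.\<close>

lemma nondecreasing_if_derivative_nonneg:
  fixes f f' :: "real \<Rightarrow> real"
  assumes "a \<le> b"
    and "\<And>x. a \<le> x \<Longrightarrow> x \<le> b \<Longrightarrow> (f has_real_derivative f' x) (at x)"
    and "\<And>x. a \<le> x \<Longrightarrow> x \<le> b \<Longrightarrow> 0 \<le> f' x"
  shows "f a \<le> f b"
  using assms(1)
proof (rule DERIV_nonneg_imp_nondecreasing)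
  fix x assume "a \<le> x" "x \<le> b"
  with assms(2,3) show "\<exists>y. (f has_real_derivative y) (at x) \<and> 0 \<le> y" by blast
qed

lemma concave_on_chord_le:
  fixes f :: "real \<Rightarrow> real"
  assumes "concave_on {a..b} f" "x \<in> {a..b}"
  shows "f a + (f b - f a) / (b - a) * (x - a) \<le> f x"
proof -
  define t where "t = (x - a) / (b - a)"
  have "0 \<le> t" "t \<le> 1" "a \<le> b"
    using assms(2) by (auto simp: t_def divide_simps)
  moreover have "t * (b - a) = x - a"
    using assms(2) by (cases "a = b") (auto simp: t_def)
  then have "(1 - t) *\<^sub>R a + t *\<^sub>R b = x"
    by (simp add: algebra_simps)
  ultimately have "(1 - t) * f a + t * f b \<le> f x"
    using concave_onD[OF assms(1), of t a b] by auto
  moreover have "(f b - f a) / (b - a) * (x - a) = t * (f b - f a)"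
    by (simp add: t_def)
  ultimately show ?thesis
    by (simp add: algebra_simps)
qed

lemma antiderivative_ge_geometric_mean_if_log_concave:
  fixes g G :: "real \<Rightarrow> real"
  assumes "a \<le> b"
    and pos: "\<And>x. x \<in> {a..b} \<Longrightarrow> 0 < g x"
    and concave: "concave_on {a..b} (\<lambda>x. ln (g x))"
    and antideriv: "\<And>x. x \<in> {a..b} \<Longrightarrow> (G has_real_derivative g x) (at x)"
  shows "(b - a) * sqrt (g a * g b) \<le> G b - G a"
proof -
  define s where "s = (ln (g b) - ln (g a)) / (b - a)"
  define m where "m = (a + b) / 2"
  define c where "c = exp ((ln (g a) + ln (g b)) / 2)"
  have "c\<^sup>2 = exp (ln (g a) + ln (g b))"
    by (simp add: c_def power2_eq_square flip: exp_add)
  also have "\<dots> = g a * g b"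
    using pos[of a] pos[of b] \<open>a \<le> b\<close> by (simp add: exp_add)
  finally have c: "c = sqrt (g a * g b)"
    by (simp add: c_def real_sqrt_unique)
  have tangent: "c * (1 + s * (x - m)) \<le> g x" if x: "x \<in> {a..b}" for x
  proof -
    have "c * (1 + s * (x - m)) \<le> c * exp (s * (x - m))"
      unfolding c_def by (intro mult_left_mono exp_ge_add_one_self) auto
    also have "\<dots> = exp (ln (g a) + s * (x - a))"
      using \<open>a \<le> b\<close> by (cases "a = b") (auto simp: c_def s_def m_def field_simps simp flip: exp_add)
    also have "\<dots> \<le> exp (ln (g x))"
      using concave_on_chord_le[OF concave x] by (simp add: s_def)
    finally show ?thesis using pos[OF x] by simp
  qed
  have "G a - c * (a + s * (a - m)\<^sup>2 / 2) \<le> G b - c * (b + s * (b - m)\<^sup>2 / 2)"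
  proof (rule nondecreasing_if_derivative_nonneg[OF \<open>a \<le> b\<close>])
    fix x assume "a \<le> x" "x \<le> b"
    then show "((\<lambda>x. G x - c * (x + s * (x - m)\<^sup>2 / 2)) has_real_derivative
        g x - c * (1 + s * (x - m))) (at x)"
      by (auto intro!: derivative_eq_intros antideriv simp: field_simps)
    show "0 \<le> g x - c * (1 + s * (x - m))"
      using tangent \<open>a \<le> x\<close> \<open>x \<le> b\<close> by auto
  qed
  then show ?thesis
    by (simp add: c m_def algebra_simps power2_eq_square)
qed

lemma mult_cos_less_sin:
  fixes y :: real
  assumes "0 < y" "y \<le> pi"
  shows "y * cos y < sin y"
proof -
  have "(\<lambda>y. sin y - y * cos y) 0 < (\<lambda>y. sin y - y * cos y) y"
  proof (rule DERIV_pos_imp_increasing_open[OF \<open>0 < y\<close>])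
    fix x :: real assume "0 < x" "x < y"
    then have "((\<lambda>y. sin y - y * cos y) has_real_derivative x * sin x) (at x) \<and> 0 < x * sin x"
      using assms sin_gt_zero[of x] by (auto intro!: derivative_eq_intros simp: algebra_simps)
    then show "\<exists>z. ((\<lambda>y. sin y - y * cos y) has_real_derivative z) (at x) \<and> 0 < z" by blast
  next
    show "continuous_on {0..y} (\<lambda>y. sin y - y * cos y)" by (intro continuous_intros)
  qed
  then show ?thesis by simp
qed

lemma mult_cos_le_sin:
  fixes y :: real
  assumes "0 \<le> y" "y \<le> pi"
  shows "y * cos y \<le> sin y"
  using assms mult_cos_less_sin[of y] by (cases "y = 0") auto

lemma mult_sin_le_four_minus_four_cos:
  fixes y :: real
  assumes "0 \<le> y" "y \<le> pi"
  shows "y * sin y \<le> 4 - 4 * cos y"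
proof -
  have "(\<lambda>y. 4 - 4 * cos y - y * sin y) 0 \<le> (\<lambda>y. 4 - 4 * cos y - y * sin y) y"
  proof (rule nondecreasing_if_derivative_nonneg[OF assms(1)])
    fix x :: real assume "0 \<le> x" "x \<le> y"
    show "((\<lambda>y. 4 - 4 * cos y - y * sin y) has_real_derivative 3 * sin x - x * cos x) (at x)"
      by (auto intro!: derivative_eq_intros simp: algebra_simps)
    show "0 \<le> 3 * sin x - x * cos x"
      using mult_cos_le_sin[of x] sin_ge_zero[of x] \<open>0 \<le> x\<close> \<open>x \<le> y\<close> assms by linarith
  qed
  then show ?thesis by simp
qed

lemma five_sin_le_four_mult_plus_mult_cos:
  fixes y :: real
  assumes "0 \<le> y" "y \<le> pi"
  shows "5 * sin y \<le> 4 * y + y * cos y"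
proof -
  have "(\<lambda>y. 4 * y - 5 * sin y + y * cos y) 0 \<le> (\<lambda>y. 4 * y - 5 * sin y + y * cos y) y"
  proof (rule nondecreasing_if_derivative_nonneg[OF assms(1)])
    fix x :: real assume "0 \<le> x" "x \<le> y"
    show "((\<lambda>y. 4 * y - 5 * sin y + y * cos y) has_real_derivative 4 - 4 * cos x - x * sin x) (at x)"
      by (auto intro!: derivative_eq_intros simp: algebra_simps)
    show "0 \<le> 4 - 4 * cos x - x * sin x"
      using mult_sin_le_four_minus_four_cos[of x] \<open>0 \<le> x\<close> \<open>x \<le> y\<close> assms by linarith
  qed
  then show ?thesis by simp
qed

lemma six_minus_six_cos_le:
  fixes y :: real
  assumes "0 \<le> y"
  shows "6 - 6 * cos y \<le> 2 * y\<^sup>2 + y * sin y"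
proof (cases "y \<le> pi")
  case True
  have "(\<lambda>y. 2 * y\<^sup>2 - 6 + 6 * cos y + y * sin y) 0 \<le> (\<lambda>y. 2 * y\<^sup>2 - 6 + 6 * cos y + y * sin y) y"
  proof (rule nondecreasing_if_derivative_nonneg[OF assms(1)])
    fix x :: real assume "0 \<le> x" "x \<le> y"
    show "((\<lambda>y. 2 * y\<^sup>2 - 6 + 6 * cos y + y * sin y) has_real_derivative 4 * x - 5 * sin x + x * cos x) (at x)"
      by (auto intro!: derivative_eq_intros simp: algebra_simps)
    show "0 \<le> 4 * x - 5 * sin x + x * cos x"
      using five_sin_le_four_mult_plus_mult_cos[of x] \<open>0 \<le> x\<close> \<open>x \<le> y\<close> True by linarith
  qed
  then show ?thesis by simp
next
  case False
  then have "3 \<le> y" using pi_gt3 by linarith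
  then have "3 * y \<le> y\<^sup>2"
    unfolding power2_eq_square by (intro mult_right_mono) auto
  moreover have "- y \<le> y * sin y"
    using mult_left_mono[OF sin_ge_minus_one[of y] assms] by simp
  ultimately show ?thesis using cos_ge_minus_one[of y] \<open>3 \<le> y\<close> by linarith
qed

lemma quartic_cos_sin_bound:
  fixes y :: real
  assumes "0 \<le> y"
  shows "16 + 6 * y\<^sup>2 \<le> y ^ 4 + (16 - 2 * y\<^sup>2) * cos y + 16 * y * sin y"
proof -
  let ?Q = "\<lambda>y. y ^ 4 - 6 * y\<^sup>2 - 16 + (16 - 2 * y\<^sup>2) * cos y + 16 * y * sin y"
  have "?Q 0 \<le> ?Q y"
  proof (rule nondecreasing_if_derivative_nonneg[OF assms(1)])
    fix x :: real assume "0 \<le> x" "x \<le> y"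
    show "(?Q has_real_derivative 2 * x * (2 * x\<^sup>2 - 6 + 6 * cos x + x * sin x)) (at x)"
      by (auto intro!: derivative_eq_intros simp: algebra_simps power2_eq_square power3_eq_cube)
    show "0 \<le> 2 * x * (2 * x\<^sup>2 - 6 + 6 * cos x + x * sin x)"
      using six_minus_six_cos_le[of x] \<open>0 \<le> x\<close> by simp
  qed
  then show ?thesis by simp
qed

lemma sin_minus_mult_cos_sq_le:
  fixes x :: real
  assumes "0 \<le> x"
  shows "2 * (sin x - x * cos x)\<^sup>2 \<le> x\<^sup>2 * (x\<^sup>2 - (sin x)\<^sup>2)"
proof -
  have "16 * (x\<^sup>2 * (x\<^sup>2 - (sin x)\<^sup>2) - 2 * (sin x - x * cos x)\<^sup>2)
      = (2 * x) ^ 4 - 6 * (2 * x)\<^sup>2 - 16 + (16 - 2 * (2 * x)\<^sup>2) * cos (2 * x) + 16 * (2 * x) * sin (2 * x)"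
    unfolding sin_double cos_double using sin_cos_squared_add[of x] by algebra
  then show ?thesis
    using quartic_cos_sin_bound[of "2 * x"] assms by simp
qed

lemma concave_on_ln_sin_minus_mult_cos_div_square:
  assumes "convex S" and pos: "\<And>x. x \<in> S \<Longrightarrow> 0 < x \<and> x * cos x < sin x"
  shows "concave_on S (\<lambda>x. ln ((sin x - x * cos x) / x\<^sup>2))"
proof (rule f''_le0_imp_concave[OF assms(1)])
  fix x assume "x \<in> S"
  define h where "h = sin x - x * cos x"
  have "0 < x" "0 < h"
    using pos[OF \<open>x \<in> S\<close>] by (auto simp: h_def)
  have dh: "((\<lambda>x. sin x - x * cos x) has_real_derivative x * sin x) (at x)"
    by (auto intro!: derivative_eq_intros simp: algebra_simps)
  show "((\<lambda>x. ln ((sin x - x * cos x) / x\<^sup>2)) has_real_derivative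
      x * sin x / (sin x - x * cos x) - 2 / x) (at x)"
    using \<open>0 < x\<close> \<open>0 < h\<close> unfolding h_def
    by (auto intro!: derivative_eq_intros dh simp: field_simps power2_eq_square)
  show "((\<lambda>x. x * sin x / (sin x - x * cos x) - 2 / x) has_real_derivative
      2 / x\<^sup>2 - (x\<^sup>2 - (sin x)\<^sup>2) / (sin x - x * cos x)\<^sup>2) (at x)"
  proof -
    have "((\<lambda>x. x * sin x / (sin x - x * cos x) - 2 / x) has_real_derivative
        ((sin x + x * cos x) * h - x * sin x * (x * sin x)) / (h * h) + 2 / (x * x)) (at x)"
      using \<open>0 < x\<close> \<open>0 < h\<close> unfolding h_def
      by (auto intro!: derivative_eq_intros dh simp: power2_eq_square)
    moreover have "((sin x + x * cos x) * h - x * sin x * (x * sin x)) / (h * h) + 2 / (x * x)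
        = 2 / x\<^sup>2 - (x\<^sup>2 - (sin x)\<^sup>2) / (sin x - x * cos x)\<^sup>2"
    proof -
      have "(sin x + x * cos x) * h - x * sin x * (x * sin x) = (sin x)\<^sup>2 - x\<^sup>2"
        unfolding h_def using sin_cos_squared_add[of x] by algebra
      then show ?thesis by (simp add: h_def power2_eq_square minus_divide_left)
    qed
    ultimately show ?thesis by simp
  qed
  have "2 * h\<^sup>2 \<le> x\<^sup>2 * (x\<^sup>2 - (sin x)\<^sup>2)"
    using sin_minus_mult_cos_sq_le[of x] \<open>0 < x\<close> by (simp add: h_def)
  then show "2 / x\<^sup>2 - (x\<^sup>2 - (sin x)\<^sup>2) / (sin x - x * cos x)\<^sup>2 \<le> 0"
    using \<open>0 < x\<close> \<open>0 < h\<close> by (simp add: h_def[symmetric] field_simps)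
qed

lemma mult_cos_less_sin_below_j32:
  fixes x :: real
  assumes "0 < x" "x < j32"
  shows "x * cos x < sin x"
proof (rule ccontr)
  assume "\<not> x * cos x < sin x"
  with assms mult_cos_less_sin[of x] have "pi < x" by force
  then obtain z where z: "pi \<le> z" "z \<le> x" "sin z - z * cos z = 0"
    using IVT2[of "\<lambda>x. sin x - x * cos x" x 0 pi] \<open>\<not> x * cos x < sin x\<close> mult_cos_less_sin[of pi]
    by (auto intro!: continuous_intros)
  moreover have "0 < z"
    using pi_gt_zero \<open>pi \<le> z\<close> by linarith
  ultimately have "z \<in> {x. 0 < x \<and> sin x = x * cos x}"
    by simp
  moreover have "bdd_below {x::real. 0 < x \<and> sin x = x * cos x}"
    by (rule bdd_belowI[of _ 0]) auto
  ultimately have "j32 \<le> z"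
    unfolding j32_def by (rule cInf_lower)
  with z \<open>x < j32\<close> show False by simp
qed

lemma sin_cross_difference_lower_bound:
  fixes a b :: real
  assumes "0 < a" "a \<le> b" and pos: "\<And>x. x \<in> {a..b} \<Longrightarrow> x * cos x < sin x"
  shows "(b - a) * sqrt ((sin a - a * cos a) * (sin b - b * cos b)) \<le> b * sin a - a * sin b"
proof -
  define g where "g x = (sin x - x * cos x) / x\<^sup>2" for x :: real
  have "(b - a) * sqrt (g a * g b) \<le> (- sin b / b) - (- sin a / a)"
  proof (rule antiderivative_ge_geometric_mean_if_log_concave[OF \<open>a \<le> b\<close>])
    fix x :: real assume x: "x \<in> {a..b}"
    with \<open>0 < a\<close> have "0 < x" by auto
    then show "0 < g x"
      using pos[OF x] by (simp add: g_def)
    show "((\<lambda>x. - sin x / x) has_real_derivative g x) (at x)"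
      using \<open>0 < x\<close> by (auto intro!: derivative_eq_intros simp: g_def field_simps power2_eq_square)
  next
    show "concave_on {a..b} (\<lambda>x. ln (g x))"
      unfolding g_def using \<open>0 < a\<close> pos
      by (intro concave_on_ln_sin_minus_mult_cos_div_square) auto
  qed
  moreover have "sqrt ((sin a - a * cos a) * (sin b - b * cos b)) = sqrt (g a * g b) * (a * b)"
    using \<open>0 < a\<close> \<open>a \<le> b\<close>
    by (simp add: g_def real_sqrt_mult real_sqrt_divide)
  ultimately have "(b - a) * sqrt ((sin a - a * cos a) * (sin b - b * cos b))
      \<le> (sin a / a - sin b / b) * (a * b)"
    using \<open>0 < a\<close> \<open>a \<le> b\<close> by (simp add: mult.assoc[symmetric] mult_right_mono)
  also have "\<dots> = b * sin a - a * sin b"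
    using \<open>0 < a\<close> \<open>a \<le> b\<close> by (simp add: field_simps)
  finally show ?thesis .
qed

lemma sin_cross_difference_lower_bound_ordered:
  fixes a b :: real
  assumes "0 \<le> a" "a \<le> b" "b \<le> j32"
  shows "(b - a) * sqrt ((a * cos a - sin a) * (b * cos b - sin b)) \<le> \<bar>b * sin a - a * sin b\<bar>"
proof (cases "0 < a \<and> a < b \<and> b * cos b < sin b")
  case True
  have "x * cos x < sin x" if "x \<in> {a..b}" for x
    using mult_cos_less_sin_below_j32[of x] True that assms by (cases "x = b") auto
  with True sin_cross_difference_lower_bound[of a b] show ?thesis
    by (simp add: algebra_simps)
next
  case False
  have "(a * cos a - sin a) * (b * cos b - sin b) \<le> 0" if "a \<noteq> 0" "a \<noteq> b"
  proof -
    from that have "0 < a" "a < b" using assms by auto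
    have "a * cos a < sin a"
      using mult_cos_less_sin_below_j32 \<open>0 < a\<close> \<open>a < b\<close> assms by simp
    moreover have "sin b \<le> b * cos b"
      using False \<open>0 < a\<close> \<open>a < b\<close> by simp
    ultimately show ?thesis by (simp add: mult_nonpos_nonneg)
  qed
  then have "(b - a) * sqrt ((a * cos a - sin a) * (b * cos b - sin b)) \<le> 0"
    using assms by (cases "a = 0 \<or> a = b") (auto intro: mult_nonneg_nonpos)
  then show ?thesis
    by linarith
qed

theorem mainTheorem9:
  fixes a b :: real
  assumes "a \<in> {0..j32}" and "b \<in> {0..j32}"
  shows "\<bar>b * sin a - a * sin b\<bar> \<ge>
         \<bar>a - b\<bar> * sqrt ((a * cos a - sin a) * (b * cos b - sin b))"
proof (cases "a \<le> b")
  case True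
  then show ?thesis
    using sin_cross_difference_lower_bound_ordered[of a b] assms by simp
next
  case False
  then show ?thesis
    using sin_cross_difference_lower_bound_ordered[of b a] assms
    by (simp add: abs_minus_commute mult.commute)
qed

end
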